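(* Let $X\in\mathbb{R}^{d\times d}$ with $X+X^\top$ positive definite, $\gamma\in(0,1)$, $\gamma_k=(k+1)^{-\gamma}$ for $k\ge0$. Let $q=\lambda_{\min}(X+X^\top)/4$, $\mu=-\lambda_{\min}(X+X^\top)+\lambda_{\max}(X^\top X)$, $K=\big\lceil\big(\lambda_{\max}(X^\top X)/(\lambda_{\min}(X+X^\top)-2q)\big)^{1/\gamma}\big\rceil$, and $$C=\max\Big\{1,\ \sqrt{\max_{0\le\ell_1\le\ell_2\le K}\prod_{\ell=\ell_1}^{\ell_2}e^{\gamma_\ell(\mu+2q)}}\Big\}.$$ Then for all integers $0\le i\le n$, $$\prod_{k=i}^{n}\|I-\gamma_kX\|\le C\,e^{-q\sum_{k=i}^n\gamma_k}.$$
   Context: $\|\cdot\|$ is the spectral norm; $\lambda_{\min},\lambda_{\max}$ denote smallest and largest eigenvalues. *)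

theory Defs
  imports "HOL-Analysis.Analysis"
begin

definition real_eigenvalues :: "real^'n^'n \<Rightarrow> real set" where
  "real_eigenvalues A = {l. \<exists>v. v \<noteq> 0 \<and> A *v v = l *\<^sub>R v}"

text \<open>Smallest / largest eigenvalue (used for symmetric matrices, whose eigenvalues are real).\<close>
definition lambda_min :: "real^'n^'n \<Rightarrow> real" where
  "lambda_min A = Min (real_eigenvalues A)"

definition lambda_max :: "real^'n^'n \<Rightarrow> real" where
  "lambda_max A = Max (real_eigenvalues A)"

definition pos_def :: "real^'n^'n \<Rightarrow> bool" where
  "pos_def A \<longleftrightarrow> (\<forall>v. v \<noteq> 0 \<longrightarrow> v \<bullet> (A *v v) > 0)"

definition spec_norm :: "real^'n^'n \<Rightarrow> real" where
  "spec_norm A = onorm (\<lambda>v. A *v v)"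

end

theory Submission
  imports Defs
begin

text \<open>
  Writing \<open>\<lambda> = \<lambda>\<^sub>m\<^sub>i\<^sub>n(X + X\<^sup>T) = 4q\<close> and \<open>\<Lambda> = \<lambda>\<^sub>m\<^sub>a\<^sub>x(X\<^sup>TX)\<close>, the Rayleigh bounds
  \<open>v\<^sup>T(X + X\<^sup>T)v \<ge> \<lambda>|v|\<^sup>2\<close> and \<open>|Xv|\<^sup>2 \<le> \<Lambda>|v|\<^sup>2\<close> give
  \<open>|(I - gX)v|\<^sup>2 \<le> (1 - g\<lambda> + g\<^sup>2\<Lambda>)|v|\<^sup>2 \<le> e\<^bsup>-g\<lambda> + g\<^sup>2\<Lambda>\<^esup>|v|\<^sup>2\<close>, i.e.
  \<open>\<parallel>I - \<gamma>\<^sub>kX\<parallel> \<le> e\<^bsup>-q\<gamma>\<^sub>k\<^esup> e\<^bsup>\<gamma>\<^sub>k(\<gamma>\<^sub>k\<Lambda> - 2q)/2\<^esup>\<close>.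
  The excess exponent \<open>\<gamma>\<^sub>k(\<gamma>\<^sub>k\<Lambda> - 2q)/2\<close> is at most \<open>\<gamma>\<^sub>k(\<mu> + 2q)/2\<close> since
  \<open>\<gamma>\<^sub>k \<le> 1\<close>, and it is nonpositive once \<open>\<gamma>\<^sub>k\<Lambda> \<le> 2q\<close>, which holds for \<open>k \<ge> K\<close>.
  So the product of the excess factors over \<open>i..n\<close> is bounded by the square root
  of a product over a subinterval of \<open>0..K\<close>, hence by \<open>C\<close>.
\<close>

lemma symmetric_matrix_inner_commute:
  fixes A :: "real^'n^'n"
  assumes "transpose A = A"
  shows "(A *v x) \<bullet> y = x \<bullet> (A *v y)"
proof -
  have "A *v x = x v* A" using assms by (metis transpose_matrix_vector)
  then show ?thesis by (simp add: dot_lmul_matrix)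
qed

text \<open>Eigenvectors for distinct eigenvalues are orthogonal, hence independent.\<close>

lemma finite_real_eigenvalues_symmetric:
  fixes A :: "real^'n^'n"
  assumes sym: "transpose A = A"
  shows "finite (real_eigenvalues A)"
proof -
  define E where "E = real_eigenvalues A"
  define e where "e l = (SOME v. v \<noteq> 0 \<and> A *v v = l *\<^sub>R v)" for l
  have e: "e l \<noteq> 0 \<and> A *v e l = l *\<^sub>R e l" if "l \<in> E" for l
    using that unfolding E_def real_eigenvalues_def e_def by (metis (mono_tags, lifting) someI_ex mem_Collect_eq)
  have inj: "inj_on e E"
  proof (rule inj_onI)
    fix l l' assume l: "l \<in> E" "l' \<in> E" "e l = e l'"
    then have "l *\<^sub>R e l = l' *\<^sub>R e l" using e by metis
    then show "l = l'" using e[OF l(1)] by simp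
  qed
  have "pairwise orthogonal (e ` E)"
  proof (clarsimp simp: pairwise_def)
    fix l l' assume l: "l \<in> E" "l' \<in> E" "e l \<noteq> e l'"
    have "(A *v e l) \<bullet> e l' = e l \<bullet> (A *v e l')" by (rule symmetric_matrix_inner_commute[OF sym])
    then have "l * (e l \<bullet> e l') = l' * (e l \<bullet> e l')" using e[OF l(1)] e[OF l(2)] by simp
    then show "orthogonal (e l) (e l')" using l by (auto simp: orthogonal_def)
  qed
  moreover have "0 \<notin> e ` E" using e by auto
  ultimately have "independent (e ` E)" by (rule pairwise_orthogonal_independent)
  then have "finite (e ` E)" using independent_bound by blast
  then show ?thesis using inj finite_imageD E_def by blast
qed

lemma quadratic_form_attains_min_on_sphere:
  fixes A :: "real^'n^'n"
  obtains u where "norm u = 1" and "\<And>v. (u \<bullet> (A *v u)) * (v \<bullet> v) \<le> v \<bullet> (A *v v)"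
proof -
  let ?f = "\<lambda>v. v \<bullet> (A *v v)"
  have "axis undefined 1 \<in> sphere (0::real^'n) 1"
    by (simp add: norm_axis_1)
  moreover have "continuous_on (sphere 0 1) ?f"
    by (intro continuous_intros)
  ultimately obtain u where u: "u \<in> sphere 0 1" and min: "\<And>y. y \<in> sphere 0 1 \<Longrightarrow> ?f u \<le> ?f y"
    using continuous_attains_inf[OF compact_sphere] by blast
  have "?f u * (v \<bullet> v) \<le> ?f v" for v
  proof (cases "v = 0")
    case False
    then have "?f u \<le> ?f (v /\<^sub>R norm v)" by (intro min) simp
    also have "?f (v /\<^sub>R norm v) = ?f v / (norm v)\<^sup>2"
      by (simp add: matrix_vector_mult_scaleR power2_eq_square divide_simps)
    finally show ?thesis using False by (simp add: divide_simps power2_norm_eq_inner)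
  qed simp
  then show ?thesis using u that by simp
qed

text \<open>
  A minimizer of the Rayleigh quotient is an eigenvector: with \<open>r = Au - mu\<close>, the
  nonnegativity of \<open>(u + tw)\<^sup>T(A - m)(u + tw) = 2t w\<^sup>Tr + t\<^sup>2 w\<^sup>T(A - m)w\<close> for all \<open>t\<close>
  forces \<open>w\<^sup>Tr = 0\<close>; take \<open>w = r\<close>.
\<close>

lemma eigenvector_if_quadratic_form_min:
  fixes A :: "real^'n^'n"
  assumes sym: "transpose A = A"
    and lower: "\<And>v. m * (v \<bullet> v) \<le> v \<bullet> (A *v v)"
    and attained: "u \<bullet> (A *v u) = m * (u \<bullet> u)"
  shows "A *v u = m *\<^sub>R u"
proof -
  define r where "r = A *v u - m *\<^sub>R u"
  define b where "b = r \<bullet> (A *v r) - m * (r \<bullet> r)"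
  have expand: "0 \<le> 2 * t * (r \<bullet> r) + t\<^sup>2 * b" for t
  proof -
    have "0 \<le> (u + t *\<^sub>R r) \<bullet> (A *v (u + t *\<^sub>R r)) - m * ((u + t *\<^sub>R r) \<bullet> (u + t *\<^sub>R r))"
      using lower[of "u + t *\<^sub>R r"] by simp
    also have "\<dots> = 2 * t * (r \<bullet> r) + t\<^sup>2 * b"
    proof -
      have "u \<bullet> (A *v r) = r \<bullet> (A *v u)"
        using symmetric_matrix_inner_commute[OF sym, of r u] by (simp add: inner_commute)
      moreover have "r \<bullet> (A *v u) - m * (r \<bullet> u) = r \<bullet> r"
        unfolding r_def by (simp add: inner_diff_right)
      ultimately show ?thesis
        unfolding b_def
        by (simp add: algebra_simps inner_add_left inner_add_right attained
            power2_eq_square inner_commute[of u r])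
    qed
    finally show ?thesis .
  qed
  define s where "s = 1 / (\<bar>b\<bar> + 1)"
  have s: "0 < s" "s * b < 2" unfolding s_def by (auto simp: divide_simps)
  have "0 \<le> s * (r \<bullet> r)\<^sup>2 * (s * b - 2)"
    using expand[of "- s * (r \<bullet> r)"] by (simp add: algebra_simps power2_eq_square)
  moreover have "s * (r \<bullet> r)\<^sup>2 * (s * b - 2) \<le> 0"
    using s by (intro mult_nonneg_nonpos) auto
  ultimately have "s * (r \<bullet> r)\<^sup>2 = 0"
    using s by simp
  then have "r \<bullet> r = 0"
    using s by simp
  then show ?thesis unfolding r_def by simp
qed

lemma lambda_min_le_quadratic_form:
  fixes A :: "real^'n^'n"
  assumes sym: "transpose A = A"
  shows "lambda_min A \<in> real_eigenvalues A"
    and "lambda_min A * (v \<bullet> v) \<le> v \<bullet> (A *v v)"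
proof -
  obtain u where u: "norm u = 1" and lower: "\<And>v. (u \<bullet> (A *v u)) * (v \<bullet> v) \<le> v \<bullet> (A *v v)"
    using quadratic_form_attains_min_on_sphere[of A] by blast
  define m where "m = u \<bullet> (A *v u)"
  have "A *v u = m *\<^sub>R u"
    using u lower unfolding m_def by (intro eigenvector_if_quadratic_form_min[OF sym]) (auto simp: norm_eq_1)
  then have m: "m \<in> real_eigenvalues A"
    using u unfolding real_eigenvalues_def by (intro CollectI exI[of _ u]) auto
  have fin: "finite (real_eigenvalues A)"
    by (rule finite_real_eigenvalues_symmetric[OF sym])
  show "lambda_min A \<in> real_eigenvalues A"
    unfolding lambda_min_def using fin m by (intro Min_in) auto
  have "lambda_min A \<le> m"
    unfolding lambda_min_def using fin m by simp
  then show "lambda_min A * (v \<bullet> v) \<le> v \<bullet> (A *v v)"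
    using lower[of v] unfolding m_def by (meson inner_ge_zero mult_right_mono order_trans)
qed

lemma matrix_vector_mult_uminus_left:
  fixes A :: "real^'n^'n"
  shows "(- A) *v v = - (A *v v)"
  by (simp add: matrix_vector_mult_def vec_eq_iff sum_negf)

lemma real_eigenvalues_uminus:
  fixes A :: "real^'n^'n"
  shows "real_eigenvalues (- A) = uminus ` real_eigenvalues A"
proof -
  have "(- A) *v v = l *\<^sub>R v \<longleftrightarrow> A *v v = (- l) *\<^sub>R v" for v :: "real^'n" and l
    unfolding matrix_vector_mult_uminus_left scaleR_minus_left by (rule neg_equal_iff_equal[symmetric, THEN trans]) simp
  then have eig: "l \<in> real_eigenvalues (- A) \<longleftrightarrow> - l \<in> real_eigenvalues A" for l
    unfolding real_eigenvalues_def by simp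
  show ?thesis
    by (rule set_eqI) (metis eig image_iff minus_minus)
qed

lemma quadratic_form_le_lambda_max:
  fixes A :: "real^'n^'n"
  assumes sym: "transpose A = A"
  shows "v \<bullet> (A *v v) \<le> lambda_max A * (v \<bullet> v)"
proof -
  have "transpose (- A) = - transpose A"
    by (simp add: transpose_def vec_eq_iff)
  then have sym': "transpose (- A) = - A"
    using sym by simp
  have "finite (real_eigenvalues A)" "real_eigenvalues A \<noteq> {}"
    using finite_real_eigenvalues_symmetric[OF sym] lambda_min_le_quadratic_form(1)[OF sym] by auto
  then have "lambda_max A = - lambda_min (- A)"
    unfolding lambda_max_def lambda_min_def real_eigenvalues_uminus by (simp add: image_image)
  then show ?thesis
    using lambda_min_le_quadratic_form(2)[OF sym', of v] by (simp add: matrix_vector_mult_uminus_left)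
qed

lemma lambda_min_pos_if_pos_def:
  fixes A :: "real^'n^'n"
  assumes "transpose A = A" and "pos_def A"
  shows "0 < lambda_min A"
proof -
  obtain u where u: "u \<noteq> 0" "A *v u = lambda_min A *\<^sub>R u"
    using lambda_min_le_quadratic_form(1)[OF assms(1)] unfolding real_eigenvalues_def by blast
  have "0 < u \<bullet> (A *v u)" using assms(2) u(1) unfolding pos_def_def by blast
  then have "0 < lambda_min A * (u \<bullet> u)" using u(2) by simp
  then show ?thesis by (metis inner_ge_zero not_le zero_less_mult_iff)
qed

lemma transpose_add_transpose_self:
  fixes X :: "real^'n^'n"
  shows "transpose (X + transpose X) = X + transpose X"
  by (simp add: transpose_def vec_eq_iff add.commute)

lemma transpose_gram:
  fixes X :: "real^'n^'n"
  shows "transpose (transpose X ** X) = transpose X ** X"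
  by (simp add: matrix_transpose_mul)

lemma quadratic_form_gram:
  fixes X :: "real^'n^'n"
  shows "v \<bullet> ((transpose X ** X) *v v) = (X *v v) \<bullet> (X *v v)"
  by (simp add: matrix_vector_mul_assoc[symmetric] inner_commute[of v] dot_lmul_matrix)

lemma quadratic_form_symmetrization:
  fixes X :: "real^'n^'n"
  shows "v \<bullet> ((X + transpose X) *v v) = 2 * (v \<bullet> (X *v v))"
  by (simp add: matrix_vector_mult_add_rdistrib inner_add_right inner_commute[of v "v v* X"] dot_lmul_matrix)

lemma lambda_max_gram_nonneg:
  fixes X :: "real^'n^'n"
  shows "0 \<le> lambda_max (transpose X ** X)"
proof -
  let ?v = "axis undefined 1 :: real^'n"
  have "0 \<le> ?v \<bullet> ((transpose X ** X) *v ?v)"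
    unfolding quadratic_form_gram by simp
  also have "\<dots> \<le> lambda_max (transpose X ** X) * (?v \<bullet> ?v)"
    by (rule quadratic_form_le_lambda_max[OF transpose_gram])
  finally show ?thesis by (simp add: inner_axis_axis)
qed

lemma exp_half_squared: "(exp (x / 2))\<^sup>2 = exp (x :: real)"
  by (simp add: power2_eq_square flip: exp_add)

lemma spec_norm_id_minus_scaleR_le:
  fixes X :: "real^'n^'n"
  assumes "0 \<le> g"
  shows "spec_norm (mat 1 - g *\<^sub>R X)
    \<le> exp ((g\<^sup>2 * lambda_max (transpose X ** X) - g * lambda_min (X + transpose X)) / 2)"
  unfolding spec_norm_def
proof (rule onorm_le)
  fix v :: "real^'n"
  define lam where "lam = lambda_min (X + transpose X)"
  define Lam where "Lam = lambda_max (transpose X ** X)"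
  define x where "x = g\<^sup>2 * Lam - g * lam"
  have lower: "lam * (v \<bullet> v) \<le> 2 * (v \<bullet> (X *v v))"
    using lambda_min_le_quadratic_form(2)[OF transpose_add_transpose_self[of X], of v]
    unfolding lam_def quadratic_form_symmetrization .
  have upper: "(X *v v) \<bullet> (X *v v) \<le> Lam * (v \<bullet> v)"
    using quadratic_form_le_lambda_max[OF transpose_gram[of X], of v]
    unfolding Lam_def quadratic_form_gram .
  have step: "(mat 1 - g *\<^sub>R X) *v v = v - g *\<^sub>R (X *v v)"
    by (simp add: matrix_vector_mult_diff_rdistrib scaleR_matrix_vector_assoc)
  have "(norm ((mat 1 - g *\<^sub>R X) *v v))\<^sup>2
      = v \<bullet> v - g * (2 * (v \<bullet> (X *v v))) + g\<^sup>2 * ((X *v v) \<bullet> (X *v v))"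
    unfolding step power2_norm_eq_inner
    by (simp add: inner_diff_left inner_diff_right inner_commute[of "X *v v" v] algebra_simps power2_eq_square)
  also have "\<dots> \<le> (1 + x) * (v \<bullet> v)"
    using mult_left_mono[OF lower assms] mult_left_mono[OF upper, of "g\<^sup>2"]
    unfolding x_def by (simp add: algebra_simps)
  also have "\<dots> \<le> exp x * (v \<bullet> v)"
    using exp_ge_add_one_self[of x] by (intro mult_right_mono) simp_all
  also have "\<dots> = (exp (x / 2) * norm v)\<^sup>2"
    by (simp add: power_mult_distrib exp_half_squared power2_norm_eq_inner)
  finally show "norm ((mat 1 - g *\<^sub>R X) *v v) \<le> exp ((g\<^sup>2 * Lam - g * lam) / 2) * norm v"
    unfolding x_def by (rule power2_le_imp_le) simp
qed

lemma powr_neg_mul_le_if_ceiling_le: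
  fixes \<gamma> L c :: real
  assumes "0 < \<gamma>" "0 \<le> L" "0 < c" "nat \<lceil>(L / c) powr (1 / \<gamma>)\<rceil> \<le> k"
  shows "(real k + 1) powr (- \<gamma>) * L \<le> c"
proof (cases "L = 0")
  case False
  define r where "r = L / c"
  have r: "0 < r" unfolding r_def using assms False by simp
  have "r powr (1 / \<gamma>) \<le> real k + 1"
    using assms(4) unfolding r_def by linarith
  then have "(r powr (1 / \<gamma>)) powr \<gamma> \<le> (real k + 1) powr \<gamma>"
    using assms(1) by (intro powr_mono2) auto
  then have "r \<le> (real k + 1) powr \<gamma>"
    using assms(1) r by (simp add: powr_powr)
  then have "(real k + 1) powr (- \<gamma>) \<le> inverse r"
    unfolding powr_minus using r by (intro le_imp_inverse_le) auto
  moreover have "0 < L" using assms(2) False by simp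
  ultimately show ?thesis
    unfolding r_def by (simp add: le_divide_eq)
qed (use assms(3) in simp)

lemma prod_spec_norm_id_minus_scaleR_le:
  fixes X :: "real^'n^'n" and g :: "nat \<Rightarrow> real"
  assumes "\<And>k. 0 \<le> g k"
  defines "q \<equiv> lambda_min (X + transpose X) / 4" and "\<Lambda> \<equiv> lambda_max (transpose X ** X)"
  shows "(\<Prod>k=i..n. spec_norm (mat 1 - g k *\<^sub>R X))
    \<le> exp (- q * (\<Sum>k=i..n. g k)) * exp (\<Sum>k=i..n. g k * (g k * \<Lambda> - 2 * q) / 2)"
proof -
  have "spec_norm (mat 1 - g k *\<^sub>R X) \<le> exp (- q * g k + g k * (g k * \<Lambda> - 2 * q) / 2)" for k
  proof -
    have "((g k)\<^sup>2 * \<Lambda> - g k * lambda_min (X + transpose X)) / 2 = - q * g k + g k * (g k * \<Lambda> - 2 * q) / 2"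
      unfolding q_def by (simp add: field_simps power2_eq_square)
    then show ?thesis
      using spec_norm_id_minus_scaleR_le[OF assms(1), of k X] unfolding \<Lambda>_def by metis
  qed
  then have "(\<Prod>k=i..n. spec_norm (mat 1 - g k *\<^sub>R X))
      \<le> (\<Prod>k=i..n. exp (- q * g k + g k * (g k * \<Lambda> - 2 * q) / 2))"
    by (intro prod_mono) (simp add: spec_norm_def onorm_pos_le)
  also have "\<dots> = exp (\<Sum>k=i..n. - q * g k + g k * (g k * \<Lambda> - 2 * q) / 2)"
    by (rule exp_sum[symmetric]) simp
  also have "\<dots> = exp (- q * (\<Sum>k=i..n. g k)) * exp (\<Sum>k=i..n. g k * (g k * \<Lambda> - 2 * q) / 2)"
    by (simp only: sum.distrib sum_distrib_left[symmetric] exp_add mult_minus_left sum_negf)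
  finally show ?thesis .
qed

text \<open>
  Only the part of the sum with \<open>k \<le> K\<close> contributes, and \<open>exp\<close> of half of it is the
  square root of the product over \<open>i..min n K\<close>.
\<close>

lemma exp_sum_le_sqrt_Max_prod:
  fixes e f :: "nat \<Rightarrow> real"
  assumes head: "\<And>k. k \<le> K \<Longrightarrow> e k \<le> f k / 2"
    and tail: "\<And>k. K < k \<Longrightarrow> e k \<le> 0"
  shows "exp (\<Sum>k=i..n. e k)
    \<le> max 1 (sqrt (Max {(\<Prod>l=l1..l2. exp (f l)) | l1 l2. l1 \<le> l2 \<and> l2 \<le> K}))"
proof -
  define P where "P = {(\<Prod>l=l1..l2. exp (f l)) | l1 l2. l1 \<le> l2 \<and> l2 \<le> K}"
  define S where "S = (\<Sum>k=i..min n K. f k)"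
  have "(\<Sum>k=i..n. e k) \<le> (\<Sum>k=i..n. if k \<le> K then f k / 2 else 0)"
    using head tail by (intro sum_mono) (auto simp: not_le)
  also have "\<dots> = (\<Sum>k\<in>{k\<in>{i..n}. k \<le> K}. f k / 2)"
    by (rule sum.inter_filter[symmetric]) simp
  also have "{k\<in>{i..n}. k \<le> K} = {i..min n K}" by auto
  finally have sum_le: "(\<Sum>k=i..n. e k) \<le> S / 2"
    unfolding S_def by (simp add: sum_divide_distrib)
  show ?thesis
  proof (cases "i \<le> min n K")
    case True
    have "P \<subseteq> (\<lambda>(l1, l2). \<Prod>l=l1..l2. exp (f l)) ` ({..K} \<times> {..K})"
      unfolding P_def by auto
    then have "finite P" by (rule finite_subset) auto
    moreover have "exp S \<in> P"
      unfolding P_def S_def exp_sum[OF finite_atLeastAtMost] using True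
      by (intro CollectI exI[of _ i] exI[of _ "min n K"]) auto
    ultimately have "exp S \<le> Max P" by simp
    have "exp (\<Sum>k=i..n. e k) \<le> exp (S / 2)"
      using sum_le by simp
    also have "\<dots> = sqrt (exp S)"
      using real_sqrt_abs[of "exp (S / 2)"] by (simp add: exp_half_squared)
    also have "\<dots> \<le> sqrt (Max P)" using \<open>exp S \<le> Max P\<close> by simp
    finally show ?thesis unfolding P_def by simp
  next
    case False
    then have "S = 0" unfolding S_def by simp
    then show ?thesis using sum_le by (intro max.coboundedI1) simp
  qed
qed

theorem mainTheorem7:
  fixes X :: "real^'n^'n" and \<gamma> :: real
    and gs :: "nat \<Rightarrow> real" and q \<mu> C :: real and K :: nat
  assumes pd: "pos_def (X + transpose X)"
    and g: "0 < \<gamma>" "\<gamma> < 1"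
    and gs_def: "\<And>k. gs k = (real k + 1) powr (- \<gamma>)"
    and q_def: "q = lambda_min (X + transpose X) / 4"
    and mu_def: "\<mu> = - lambda_min (X + transpose X) + lambda_max (transpose X ** X)"
    and K_def: "K = nat \<lceil>(lambda_max (transpose X ** X) / (lambda_min (X + transpose X) - 2 * q)) powr (1 / \<gamma>)\<rceil>"
    and C_def: "C = max 1 (sqrt (Max {(\<Prod>l=l1..l2. exp (gs l * (\<mu> + 2 * q))) | l1 l2. l1 \<le> l2 \<and> l2 \<le> K}))"
  shows "\<forall>i n. i \<le> n \<longrightarrow>
    (\<Prod>k=i..n. spec_norm (mat 1 - gs k *\<^sub>R X)) \<le> C * exp (- q * (\<Sum>k=i..n. gs k))"
proof (intro allI impI)
  fix i n :: nat
  define \<Lambda> where "\<Lambda> = lambda_max (transpose X ** X)"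
  have q: "0 < q"
    unfolding q_def using lambda_min_pos_if_pos_def[OF transpose_add_transpose_self pd] by simp
  have \<Lambda>: "0 \<le> \<Lambda>"
    unfolding \<Lambda>_def by (rule lambda_max_gram_nonneg)
  have gs: "0 < gs k" "gs k \<le> 1" for k
    unfolding gs_def using g by (auto simp: powr_minus inverse_le_1_iff ge_one_powr_ge_zero)
  have K_eq: "K = nat \<lceil>(\<Lambda> / (2 * q)) powr (1 / \<gamma>)\<rceil>"
    unfolding K_def \<Lambda>_def q_def by simp
  have "exp (\<Sum>k=i..n. gs k * (gs k * \<Lambda> - 2 * q) / 2) \<le> C"
    unfolding C_def
  proof (rule exp_sum_le_sqrt_Max_prod)
    show "gs k * (gs k * \<Lambda> - 2 * q) / 2 \<le> gs k * (\<mu> + 2 * q) / 2" for k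
      using mult_left_mono[OF gs(2)[of k], of "gs k * \<Lambda>"] gs(1)[of k] \<Lambda>
      unfolding mu_def \<Lambda>_def q_def by (simp add: field_simps)
    show "gs k * (gs k * \<Lambda> - 2 * q) / 2 \<le> 0" if "K < k" for k
      using powr_neg_mul_le_if_ceiling_le[OF g(1) \<Lambda> _ less_imp_le[OF that[unfolded K_eq]]] q gs(1)[of k]
      unfolding gs_def[symmetric] by (simp add: mult_nonneg_nonpos)
  qed
  then show "(\<Prod>k=i..n. spec_norm (mat 1 - gs k *\<^sub>R X)) \<le> C * exp (- q * (\<Sum>k=i..n. gs k))"
    using prod_spec_norm_id_minus_scaleR_le[of gs X i n] gs(1)
    unfolding q_def[symmetric] \<Lambda>_def[symmetric]
    by (smt (verit) exp_gt_zero mult.commute mult_left_mono)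
qed

end
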